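(* Let $S=K[x_1,\ldots,x_n]$ and $i,j\in[\lfloor n/2\rfloor]$. Then (1) if $i\neq j$, then $W_i\cap W_j=\emptyset$; (2) if $I\in W_i$, then there is a subset $B\subseteq[n]$ with $|B|=i$ and $W_B\subseteq G(I)$, and the set $W_B$ is uniquely determined by $I$ (i.e. any two such subsets $B$ yield the same $W_B$).
   Context: $K$ is a field; $G(I)$ is the minimal monomial generating set. With $\sigma$ the bijection $x_{i_1}\cdots x_{i_k}\mapsto\{i_1,\ldots,i_k\}$, the facet complex $\delta_{\mathcal{F}}(I)$ has facets $\sigma(g)$, $g\in G(I)$, the Stanley–Reisner complex is $\delta_{\mathcal{N}}(I)=\{\sigma(g)\mid g\text{ square-free monomial},\ g\notin I\}$, and a square-free monomial ideal $I$ is an $f$-ideal if both have the same $f$-vector. For a nonempty proper $B\subset[n]$ with complement $\overline B$, $W_B=\{x_ix_j\mid i\ne j,\ i,j\in B\text{ or } i,j\in\overline B\}$. An $f$-ideal $I$ whose $G(I)$ consists of square-free monomials of degree 2 is of $l$ type if $W_B\subseteq G(I)$ for some $B$ with $|B|=l$; $W_l$ is the set of $f$-ideals of $S$ of $l$ type. *)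

theory Defs
  imports Main
begin

text \<open>A square-free monomial ideal of S = K[x_1,...,x_n] is determined by its minimal
monomial generating set G(I); via sigma each square-free monomial is identified with the
set of its variable indices. So an ideal is represented by G :: nat set set, an antichain of
subsets of {1..n}. A square-free monomial u (a set) lies in I iff some generator divides it,
i.e. iff some g in G is contained in u. The field K plays no role.\<close>

definition sqfree_monomial_ideal :: "nat \<Rightarrow> nat set set \<Rightarrow> bool" where
  "sqfree_monomial_ideal n G \<longleftrightarrow> G \<subseteq> Pow {1..n} \<and> (\<forall>a\<in>G. \<forall>b\<in>G. a \<subseteq> b \<longrightarrow> a = b)"

definition in_ideal :: "nat set set \<Rightarrow> nat set \<Rightarrow> bool" where
  "in_ideal G u \<longleftrightarrow> (\<exists>g\<in>G. g \<subseteq> u)"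

definition facet_complex :: "nat set set \<Rightarrow> nat set set" where
  "facet_complex G = {F. \<exists>g\<in>G. F \<subseteq> g}"

definition SR_complex :: "nat \<Rightarrow> nat set set \<Rightarrow> nat set set" where
  "SR_complex n G = {F. F \<subseteq> {1..n} \<and> \<not> in_ideal G F}"

text \<open>f-vector entry f_{k-1}: number of faces with k vertices (k \<ge> 1).\<close>
definition fvec :: "nat set set \<Rightarrow> nat \<Rightarrow> nat" where
  "fvec \<Delta> k = card {F \<in> \<Delta>. card F = Suc k}"

definition f_ideal :: "nat \<Rightarrow> nat set set \<Rightarrow> bool" where
  "f_ideal n G \<longleftrightarrow> sqfree_monomial_ideal n G \<and>
     (\<forall>k. fvec (facet_complex G) k = fvec (SR_complex n G) k)"

definition W_set :: "nat \<Rightarrow> nat set \<Rightarrow> nat set set" where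
  "W_set n B = {{i, j} | i j. i \<noteq> j \<and>
      ((i \<in> B \<and> j \<in> B) \<or> (i \<in> {1..n} - B \<and> j \<in> {1..n} - B))}"

definition proper_subset_B :: "nat \<Rightarrow> nat set \<Rightarrow> bool" where
  "proper_subset_B n B \<longleftrightarrow> B \<subseteq> {1..n} \<and> B \<noteq> {} \<and> B \<noteq> {1..n}"

definition l_type :: "nat \<Rightarrow> nat \<Rightarrow> nat set set \<Rightarrow> bool" where
  "l_type n l G \<longleftrightarrow> f_ideal n G \<and> (\<forall>g\<in>G. card g = 2) \<and>
     (\<exists>B. proper_subset_B n B \<and> card B = l \<and> W_set n B \<subseteq> G)"

definition W_l :: "nat \<Rightarrow> nat \<Rightarrow> nat set set set" where
  "W_l n l = {G. l_type n l G}"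

end

theory Submission
  imports Defs
begin

text \<open>View an f-ideal G generated in degree 2 as a graph on [n]. Its 2-element faces are the
edges of G in the facet complex and the non-edges in the Stanley--Reisner complex, so G has
exactly half of the n(n-1)/2 possible edges. If G contains W_B1 and W_B2, every non-edge crosses
both cuts (B1, complement) and (B2, complement). With a = |B1 \<inter> B2|, b = |B1 - B2|,
c = |B2 - B1| and d the size of the remaining block, there are at most ad + bc such pairs, and
4(ad + bc) < n(n-1) as soon as B2 is neither B1 nor its complement. Since W_B only depends on the
partition {B, complement of B}, both claims follow.\<close>

definition pairs :: "nat \<Rightarrow> nat set set" where
  "pairs n = {e. e \<subseteq> {1..n} \<and> card e = 2}"

lemma finite_pairs: "finite (pairs n)"
  unfolding pairs_def by (rule finite_subset[of _ "Pow {1..n}"]) auto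

lemma card_pairs: "card (pairs n) = n choose 2"
  unfolding pairs_def using n_subsets[of "{1..n}" 2] by simp

lemma card_two_subset_eq: "card g = 2 \<Longrightarrow> F \<subseteq> g \<Longrightarrow> card F = 2 \<Longrightarrow> F = g"
  by (metis card_subset_eq card.infinite zero_neq_numeral)

lemma facet_complex_two_faces:
  assumes "\<forall>g\<in>G. card g = 2"
  shows "{F \<in> facet_complex G. card F = 2} = G"
proof (intro equalityI subsetI)
  fix F assume "F \<in> {F \<in> facet_complex G. card F = 2}"
  then obtain g where "g \<in> G" "F \<subseteq> g" "card F = 2"
    unfolding facet_complex_def by blast
  with assms show "F \<in> G"
    using card_two_subset_eq by metis
next
  fix g assume "g \<in> G"
  with assms show "g \<in> {F \<in> facet_complex G. card F = 2}"
    unfolding facet_complex_def by blast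
qed

lemma SR_complex_two_faces:
  assumes "\<forall>g\<in>G. card g = 2"
  shows "{F \<in> SR_complex n G. card F = 2} = pairs n - G"
proof (intro equalityI subsetI)
  fix F assume "F \<in> {F \<in> SR_complex n G. card F = 2}"
  then show "F \<in> pairs n - G"
    unfolding SR_complex_def in_ideal_def pairs_def by blast
next
  fix F assume F: "F \<in> pairs n - G"
  have "\<not> in_ideal G F"
    using F assms card_two_subset_eq unfolding in_ideal_def pairs_def by blast
  with F show "F \<in> {F \<in> SR_complex n G. card F = 2}"
    unfolding SR_complex_def pairs_def by blast
qed

lemma quadratic_f_ideal_card_non_generators:
  assumes "f_ideal n G" and "\<forall>g\<in>G. card g = 2"
  shows "n * (n - 1) = 4 * card (pairs n - G)"
proof -
  have ideal: "sqfree_monomial_ideal n G"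
    using assms(1) unfolding f_ideal_def by blast
  have "G \<subseteq> pairs n"
    using ideal assms(2) unfolding sqfree_monomial_ideal_def pairs_def by auto
  then have "card (pairs n) = card G + card (pairs n - G)"
    using card_Diff_subset[of G "pairs n"] card_mono[OF finite_pairs, of G]
      finite_subset[OF _ finite_pairs, of G] by simp
  moreover have "card G = card (pairs n - G)"
    using assms(1) facet_complex_two_faces[OF assms(2)] SR_complex_two_faces[OF assms(2)]
    unfolding f_ideal_def fvec_def by (metis Suc_1)
  moreover have "even (n * (n - 1))"
    by (cases "even n") auto
  ultimately have "n * (n - 1) div 2 = 2 * card (pairs n - G)"
    by (simp add: card_pairs choose_two)
  with \<open>even (n * (n - 1))\<close> show ?thesis
    by (elim evenE) simp
qed

lemma W_set_Diff:
  assumes "B \<subseteq> {1..n}"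
  shows "W_set n ({1..n} - B) = W_set n B"
proof -
  have "{1..n} - ({1..n} - B) = B"
    using assms by blast
  then show ?thesis
    unfolding W_set_def by blast
qed

lemma card_pairs_crossing_two_cuts:
  assumes "B1 \<subseteq> {1..n}" and "B2 \<subseteq> {1..n}"
  shows "card (pairs n - W_set n B1 - W_set n B2)
    \<le> card (B1 \<inter> B2) * card ({1..n} - B1 - B2) + card (B1 - B2) * card (B2 - B1)"
proof -
  define P where "P = (B1 \<inter> B2) \<times> ({1..n} - B1 - B2) \<union> (B1 - B2) \<times> (B2 - B1)"
  have finite_P: "finite P"
    using assms unfolding P_def by (auto intro: finite_subset)
  have "pairs n - W_set n B1 - W_set n B2 \<subseteq> (\<lambda>(u, v). {u, v}) ` P"
  proof
    fix e assume e: "e \<in> pairs n - W_set n B1 - W_set n B2"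
    then obtain u v where uv: "u \<noteq> v" "e = {u, v}" "u \<in> {1..n}" "v \<in> {1..n}"
      unfolding pairs_def by (auto simp: card_2_iff)
    have "e \<in> W_set n B" if "(u \<in> B \<and> v \<in> B) \<or> (u \<notin> B \<and> v \<notin> B)" for B
      using that uv unfolding W_set_def by blast
    with e have "(u, v) \<in> P \<or> (v, u) \<in> P"
      using uv unfolding P_def by blast
    with \<open>e = {u, v}\<close> show "e \<in> (\<lambda>(u, v). {u, v}) ` P"
      by (auto intro: rev_image_eqI insert_commute)
  qed
  then have "card (pairs n - W_set n B1 - W_set n B2) \<le> card ((\<lambda>(u, v). {u, v}) ` P)"
    using finite_P by (intro card_mono) auto
  also have "\<dots> \<le> card P"
    using finite_P by (rule card_image_le)
  also have "\<dots> \<le> card (B1 \<inter> B2) * card ({1..n} - B1 - B2) + card (B1 - B2) * card (B2 - B1)"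
    unfolding P_def by (metis card_Un_le card_cartesian_product)
  finally show ?thesis .
qed

lemma four_mult_le_square_sum: "4 * (p * q) \<le> (p + q) * (p + q :: nat)"
proof -
  have "int (4 * (p * q)) \<le> int ((p + q) * (p + q))"
    using zero_le_power2[of "int p - int q"] by (simp add: power2_eq_square algebra_simps)
  then show ?thesis
    by (simp only: of_nat_le_iff)
qed

lemma sum_lt_double_mult:
  fixes x y :: nat
  assumes "1 \<le> x" "1 \<le> y" "2 < x + y"
  shows "x + y < 2 * x * y"
proof -
  obtain u v where "x = Suc u" "y = Suc v"
    using assms(1,2) by (cases x; cases y) auto
  moreover from assms(3) calculation have "0 < u + v"
    by simp
  ultimately show ?thesis
    by (auto simp: algebra_simps)
qed

lemma four_block_cross_bound:
  fixes a b c d :: nat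
  assumes "1 \<le> a + d" "1 \<le> b + c" "1 \<le> a + b" "1 \<le> c + d" "1 \<le> a + c" "1 \<le> b + d"
  shows "4 * (a * d + b * c) < (a + b + c + d) * (a + b + c + d - 1)"
proof -
  define x y where "x = a + d" and "y = b + c"
  have "1 \<le> x" "1 \<le> y"
    using assms(1,2) unfolding x_def y_def .
  have "2 < x + y"
    using assms unfolding x_def y_def by (cases "a = 0") linarith+
  have "4 * (a * d + b * c) + (x + y) \<le> x * x + y * y + (x + y)"
    using four_mult_le_square_sum[of a d, folded x_def] four_mult_le_square_sum[of b c, folded y_def]
    unfolding distrib_left by linarith
  also have "\<dots> < x * x + y * y + 2 * x * y"
    using sum_lt_double_mult[OF \<open>1 \<le> x\<close> \<open>1 \<le> y\<close> \<open>2 < x + y\<close>] by linarith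
  also have "\<dots> = (x + y) * (x + y)"
    by (simp add: algebra_simps)
  also have "\<dots> = (x + y) * (x + y - 1) + (x + y)"
    using \<open>2 < x + y\<close> by (cases "x + y") simp_all
  also have "x + y = a + b + c + d"
    unfolding x_def y_def by simp
  finally show ?thesis
    by simp
qed

lemma quadratic_f_ideal_W_set_cut_unique:
  assumes "f_ideal n G" and "\<forall>g\<in>G. card g = 2"
    and "proper_subset_B n B1" and "W_set n B1 \<subseteq> G"
    and "proper_subset_B n B2" and "W_set n B2 \<subseteq> G"
  shows "B2 = B1 \<or> B2 = {1..n} - B1"
proof (rule ccontr)
  assume other_cut: "\<not> (B2 = B1 \<or> B2 = {1..n} - B1)"
  have B1: "B1 \<subseteq> {1..n}" "B1 \<noteq> {}" "B1 \<noteq> {1..n}"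
    and B2: "B2 \<subseteq> {1..n}" "B2 \<noteq> {}" "B2 \<noteq> {1..n}"
    using assms(3,5) unfolding proper_subset_B_def by auto
  define a b c d
    where "a = card (B1 \<inter> B2)" and "b = card (B1 - B2)" and "c = card (B2 - B1)"
      and "d = card ({1..n} - B1 - B2)"
  have finite_blocks: "finite (B1 \<inter> B2)" "finite (B1 - B2)" "finite (B2 - B1)"
    "finite ({1..n} - B1 - B2)"
    using B1 B2 by (auto intro: finite_subset)
  have "(B1 \<inter> B2) \<union> (B1 - B2) \<union> (B2 - B1) \<union> ({1..n} - B1 - B2) = {1..n}"
    using B1 B2 by blast
  then have "n = card ((B1 \<inter> B2) \<union> (B1 - B2) \<union> (B2 - B1) \<union> ({1..n} - B1 - B2))"
    by simp
  also have "\<dots> = a + b + c + d"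
    using finite_blocks unfolding a_def b_def c_def d_def
    by (subst card_Un_disjoint, auto)+
  finally have n: "n = a + b + c + d" .
  have nonempty: "1 \<le> card X + card Y" if "finite X" "finite Y" "X \<union> Y \<noteq> {}" for X Y :: "nat set"
    using that by (auto simp: Suc_le_eq card_gt_0_iff)
  have ad: "1 \<le> a + d"
    unfolding a_def d_def using B1(1) B2(1) other_cut
    by (intro nonempty finite_blocks) blast
  have bc: "1 \<le> b + c"
    unfolding b_def c_def using other_cut by (intro nonempty finite_blocks) blast
  have ab: "1 \<le> a + b" and ac: "1 \<le> a + c"
    unfolding a_def b_def c_def using B1(2) B2(2) by (intro nonempty finite_blocks; blast)+
  have cd: "1 \<le> c + d" and bd: "1 \<le> b + d"
    unfolding b_def c_def d_def using B1(1,3) B2(1,3) by (intro nonempty finite_blocks; blast)+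
  have "n * (n - 1) = 4 * card (pairs n - G)"
    using quadratic_f_ideal_card_non_generators[OF assms(1,2)] .
  also have "\<dots> \<le> 4 * card (pairs n - W_set n B1 - W_set n B2)"
    using assms(4,6) by (intro mult_le_mono2 card_mono) (auto simp: finite_pairs)
  also have "\<dots> \<le> 4 * (a * d + b * c)"
    using card_pairs_crossing_two_cuts[OF B1(1) B2(1)] unfolding a_def b_def c_def d_def by simp
  also have "\<dots> < n * (n - 1)"
    unfolding n by (rule four_block_cross_bound[OF ad bc ab cd ac bd])
  finally show False
    by simp
qed

theorem proposition4p10:
  fixes n i j :: nat
  assumes "i \<in> {1..n div 2}" and "j \<in> {1..n div 2}"
  shows "(i \<noteq> j \<longrightarrow> W_l n i \<inter> W_l n j = {}) \<and>
         (\<forall>G \<in> W_l n i.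
            (\<exists>B. proper_subset_B n B \<and> card B = i \<and> W_set n B \<subseteq> G) \<and>
            (\<forall>B1 B2. proper_subset_B n B1 \<and> card B1 = i \<and> W_set n B1 \<subseteq> G \<and>
                     proper_subset_B n B2 \<and> card B2 = i \<and> W_set n B2 \<subseteq> G
                     \<longrightarrow> W_set n B1 = W_set n B2))"
proof (intro conjI impI ballI allI)
  assume "i \<noteq> j"
  show "W_l n i \<inter> W_l n j = {}"
  proof (rule ccontr)
    assume "W_l n i \<inter> W_l n j \<noteq> {}"
    then obtain G B1 B2 where G: "f_ideal n G" "\<forall>g\<in>G. card g = 2"
      and B1: "proper_subset_B n B1" "card B1 = i" "W_set n B1 \<subseteq> G"
      and B2: "proper_subset_B n B2" "card B2 = j" "W_set n B2 \<subseteq> G"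
      unfolding W_l_def l_type_def by blast
    with \<open>i \<noteq> j\<close> have "B2 = {1..n} - B1"
      using quadratic_f_ideal_W_set_cut_unique by blast
    then have "j = n - i"
      using B1 B2 card_Diff_subset[of B1 "{1..n}"] finite_subset[of B1 "{1..n}"]
      unfolding proper_subset_B_def by auto
    with assms \<open>i \<noteq> j\<close> show False
      by auto
  qed
next
  fix G assume "G \<in> W_l n i"
  then show "\<exists>B. proper_subset_B n B \<and> card B = i \<and> W_set n B \<subseteq> G"
    unfolding W_l_def l_type_def by blast
next
  fix G B1 B2 assume "G \<in> W_l n i"
    and B: "proper_subset_B n B1 \<and> card B1 = i \<and> W_set n B1 \<subseteq> G \<and>
            proper_subset_B n B2 \<and> card B2 = i \<and> W_set n B2 \<subseteq> G"
  then have "B2 = B1 \<or> B2 = {1..n} - B1"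
    using quadratic_f_ideal_W_set_cut_unique unfolding W_l_def l_type_def by blast
  with B show "W_set n B1 = W_set n B2"
    using W_set_Diff unfolding proper_subset_B_def by auto
qed

end
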